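(* Fix $t\ge0$ and let $\phi$ be a smooth section over $\{t\}\times\mathbb R^3$ with finite $H^{1,\frac{p+q}{2}}$ norm. (i) If $-1<p$ and $0<p+1+q$, then $$\int_{\{t<r\}}\tau_-^p\tau_+^q|\phi|^2dx\lesssim\int_{\{t<r\}}\tau_-^{p+2}\tau_+^q|r^{-1}D_r(r\phi)|^2dx.$$ (ii) If $-1<p$ and $q<p+1$, then $$\int_{\{r<t\}}\tau_-^p\tau_+^q|\phi|^2dx\lesssim\int_{\{r<t\}}\tau_-^{p+2}\tau_+^q|r^{-1}D_r(r\phi)|^2dx.$$ (iii) Consequently, if $-1<p$ and $|q|<p+1$, then $\int_{\mathbb R^3}\tau_-^p\tau_+^q|\phi|^2dx\lesssim\int_{\mathbb R^3}\tau_-^{p+2}\tau_+^q|r^{-1}D_r(r\phi)|^2dx$. The implicit constants depend only on $p,q$.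
   Context: $r=|x|$, $\tau_+^2=1+(t+r)^2$, $\tau_-^2=1+(t-r)^2$. $\phi$ is a section of the trivial complex line bundle with hermitian metric and compatible connection $D$; $D_r=D_{\partial_r}$, and $\underline D$ is the spatial part of $D$. $\|\phi\|^2_{H^{1,a}}=\sum_{|I|\le1}\int(1+r^2)^{a+|I|}|\underline D^I\phi|^2dx$. *)

theory Defs
  imports "HOL-Analysis.Analysis"
begin

fun Ck :: "nat \<Rightarrow> ('a::euclidean_space \<Rightarrow> 'b::real_normed_vector) set" where
  "Ck 0 = {f. continuous_on UNIV f}"
| "Ck (Suc k) = {f. f differentiable_on UNIV \<and>
      (\<forall>i\<in>Basis. (\<lambda>x. frechet_derivative f (at x) i) \<in> Ck k)}"

definition smooth :: "('a::euclidean_space \<Rightarrow> 'b::real_normed_vector) \<Rightarrow> bool" where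
  "smooth f \<longleftrightarrow> (\<forall>k. f \<in> Ck k)"

definition tau_plus :: "real \<Rightarrow> real^3 \<Rightarrow> real" where
  "tau_plus t x = sqrt (1 + (t + norm x)\<^sup>2)"

definition tau_minus :: "real \<Rightarrow> real^3 \<Rightarrow> real" where
  "tau_minus t x = sqrt (1 + (t - norm x)\<^sup>2)"

text \<open>Hermitian connection on the trivial complex line bundle over R^3 (spatial part):
  D = d + i A with a real 1-form A (identified with a vector field).
  cov_deriv A phi x v is D_v phi at x.\<close>
definition cov_deriv :: "(real^3 \<Rightarrow> real^3) \<Rightarrow> (real^3 \<Rightarrow> complex) \<Rightarrow> real^3 \<Rightarrow> real^3 \<Rightarrow> complex" where
  "cov_deriv A phi x v = frechet_derivative phi (at x) v + \<i> * complex_of_real (A x \<bullet> v) * phi x"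

definition radial_cov_deriv :: "(real^3 \<Rightarrow> real^3) \<Rightarrow> (real^3 \<Rightarrow> complex) \<Rightarrow> real^3 \<Rightarrow> complex" where
  "radial_cov_deriv A phi x = cov_deriv A phi x (x /\<^sub>R norm x)"

definition rad_term :: "(real^3 \<Rightarrow> real^3) \<Rightarrow> (real^3 \<Rightarrow> complex) \<Rightarrow> real^3 \<Rightarrow> complex" where
  "rad_term A phi x = radial_cov_deriv A (\<lambda>y. complex_of_real (norm y) * phi y) x / complex_of_real (norm x)"

definition H1a_norm_sq :: "real \<Rightarrow> (real^3 \<Rightarrow> real^3) \<Rightarrow> (real^3 \<Rightarrow> complex) \<Rightarrow> ennreal" where
  "H1a_norm_sq a A phi =
     (\<integral>\<^sup>+ x. ennreal ((1 + (norm x)\<^sup>2) powr a * (cmod (phi x))\<^sup>2) \<partial>lborel)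
     + (\<Sum>j\<in>(UNIV::3 set). \<integral>\<^sup>+ x. ennreal ((1 + (norm x)\<^sup>2) powr (a + 1)
            * (cmod (cov_deriv A phi x (axis j 1)))\<^sup>2) \<partial>lborel)"

definition wint :: "(real^3) set \<Rightarrow> real \<Rightarrow> real \<Rightarrow> real \<Rightarrow> (real^3 \<Rightarrow> complex) \<Rightarrow> ennreal" where
  "wint S t p q f = (\<integral>\<^sup>+ x \<in> S. ennreal (tau_minus t x powr p * tau_plus t x powr q * (cmod (f x))\<^sup>2) \<partial>lborel)"

end

theory Submission
  imports Defs
begin

text \<open>Along a ray \<open>x = s\<omega>\<close>, \<open>|\<omega>| = 1\<close>, put \<open>u(s) = s \<phi>(s\<omega>)\<close> and \<open>a(s) = A(s\<omega>) \<cdot> \<omega>\<close>;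
  then \<open>s r\<^sup>-\<^sup>1 D\<^sub>r(r\<phi>) = u' + i a u\<close>, and the phase \<open>a\<close> is invisible in
  \<open>(|u|\<^sup>2)' = 2 Re(conj u u') = 2 Re(conj u (u' + i a u))\<close>. With \<open>\<rho> = \<tau>\<^sub>-\<^sup>p \<tau>\<^sub>+\<^sup>q\<close> and a
  primitive \<open>w\<close> of \<open>\<rho>\<close> vanishing at \<open>r = t\<close>, integrating \<open>(w |u|\<^sup>2)'\<close> by parts and absorbing
  the cross term by AM-GM gives the one-dimensional Hardy inequality
  \<open>\<integral> \<rho> |u|\<^sup>2 \<le> 4K\<^sup>2 \<integral> \<tau>\<^sub>-\<^sup>2 \<rho> |u' + i a u|\<^sup>2\<close> as soon as \<open>|w| \<le> K \<tau>\<^sub>-\<^sup>p\<^sup>+\<^sup>1 \<tau>\<^sub>+\<^sup>q\<close>. This bound on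
  the primitive is where \<open>p > -1\<close> (and, outside the cone, \<open>p + q > -1\<close>) is used. Inside the
  cone the boundary terms vanish since \<open>w(t) = 0 = u(0)\<close>; outside, the term at \<open>R\<close> tends to
  zero along a sequence \<open>R \<rightarrow> \<infinity>\<close> because the weighted \<open>L\<^sup>2\<close> norm of \<open>\<phi>\<close> is finite.
  Integrating over directions gives the estimates in \<open>\<real>\<^sup>3\<close>.\<close>

section \<open>Japanese bracket and radial weights\<close>

definition bracket :: "real \<Rightarrow> real" where
  "bracket s = sqrt (1 + s\<^sup>2)"

lemma bracket_pos [simp]: "0 < bracket s"
  by (simp add: bracket_def add_pos_nonneg)

lemma bracket_nonneg [simp]: "0 \<le> bracket s" and bracket_nonzero [simp]: "bracket s \<noteq> 0"
  using bracket_pos[of s] by linarith+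

lemma bracket_diff_commute: "bracket (a - b) = bracket (b - a)"
  by (simp add: bracket_def power2_commute)

lemma bracket_mono: "\<bar>a\<bar> \<le> \<bar>b\<bar> \<Longrightarrow> bracket a \<le> bracket b"
  by (simp add: bracket_def abs_le_square_iff)

lemma bracket_le_double:
  assumes "\<bar>a\<bar> \<le> 2 * \<bar>b\<bar>"
  shows "bracket a \<le> 2 * bracket b"
proof -
  have "a\<^sup>2 \<le> (2 * b)\<^sup>2"
    using assms abs_le_square_iff[of a "2 * b"] by (simp add: abs_mult)
  then have "1 + a\<^sup>2 \<le> (2 * bracket b)\<^sup>2"
    by (simp add: bracket_def power_mult_distrib add_pos_nonneg)
  then show ?thesis
    unfolding bracket_def[of a] by (intro real_le_lsqrt) auto
qed

lemma continuous_on_bracket [continuous_intros]: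
  "continuous_on S f \<Longrightarrow> continuous_on S (\<lambda>x. bracket (f x))"
  unfolding bracket_def by (intro continuous_intros)

lemma bracket_powr_eq: "bracket s powr b = (1 + s\<^sup>2) powr (b / 2)"
  by (simp add: bracket_def powr_half_sqrt[symmetric] add_pos_nonneg powr_powr)

lemma bracket_bounds:
  assumes "0 \<le> v"
  shows "1 + v \<le> sqrt 2 * bracket v" and "bracket v \<le> 1 + v"
proof -
  have "(1 + v)\<^sup>2 \<le> 2 * (1 + v\<^sup>2)"
    using zero_le_square[of "v - 1"] by (simp add: power2_eq_square algebra_simps)
  then show "1 + v \<le> sqrt 2 * bracket v"
    using assms by (simp add: bracket_def real_le_rsqrt flip: real_sqrt_mult)
  show "bracket v \<le> 1 + v"
    using assms unfolding bracket_def by (intro real_le_lsqrt) (auto simp: power2_eq_square algebra_simps)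
qed

lemma bracket_powr_le:
  assumes v: "0 \<le> v"
  shows "bracket v powr b \<le> 2 powr (\<bar>b\<bar>/2) * (1 + v) powr b"
proof (cases "b \<ge> 0")
  case True
  have "bracket v powr b \<le> (1 + v) powr b"
    using bracket_bounds(2)[OF v] True by (intro powr_mono2) auto
  also have "\<dots> \<le> 2 powr (\<bar>b\<bar>/2) * (1 + v) powr b"
    using mult_right_mono[OF ge_one_powr_ge_zero[of 2 "\<bar>b\<bar>/2"] powr_ge_zero[of "1 + v" b]] by simp
  finally show ?thesis .
next
  case False
  have "bracket v powr b \<le> ((1 + v) / sqrt 2) powr b"
    using bracket_bounds(1)[OF v] False v by (intro powr_mono2') (auto simp: field_simps)
  also have "\<dots> = (1 + v) powr b * 2 powr (- b / 2)"
    using v by (simp add: powr_divide powr_minus_divide powr_half_sqrt[symmetric] powr_powr)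
  finally show ?thesis
    using False by (simp add: mult.commute)
qed

definition bracket_int_const :: "real \<Rightarrow> real" where
  "bracket_int_const b = 2 powr (\<bar>b\<bar>/2) * sqrt 2 powr (b + 1) / (b + 1)"

lemma bracket_int_const_nonneg: "b > -1 \<Longrightarrow> 0 \<le> bracket_int_const b"
  by (simp add: bracket_int_const_def)

lemma integral_bracket_powr_le:
  assumes b: "b > -1" and d: "0 \<le> d"
  shows "integral {0..d} (\<lambda>s. bracket s powr b) \<le> bracket_int_const b * bracket d powr (b + 1)"
proof -
  have "((\<lambda>s. (1 + s) powr b) has_integral
          (1 + d) powr (b + 1) / (b + 1) - (1 + 0) powr (b + 1) / (b + 1)) {0..d}"
  proof (rule fundamental_theorem_of_calculus[OF d])
    fix s :: real assume "s \<in> {0..d}"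
    then have "0 < 1 + s" by auto
    then show "((\<lambda>s. (1 + s) powr (b + 1) / (b + 1)) has_vector_derivative (1 + s) powr b)
        (at s within {0..d})"
      using b by (auto intro!: derivative_eq_intros simp flip: has_real_derivative_iff_has_vector_derivative)
  qed
  then have int: "((\<lambda>s. 2 powr (\<bar>b\<bar>/2) * (1 + s) powr b) has_integral
          2 powr (\<bar>b\<bar>/2) * (((1 + d) powr (b + 1) - 1) / (b + 1))) {0..d}"
    by (intro has_integral_mult_right) (simp add: diff_divide_distrib)
  have "integral {0..d} (\<lambda>s. bracket s powr b)
      \<le> 2 powr (\<bar>b\<bar>/2) * (((1 + d) powr (b + 1) - 1) / (b + 1))"
    by (rule has_integral_le[OF integrable_integral int])
       (auto intro!: integrable_continuous_interval continuous_intros bracket_powr_le)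
  also have "\<dots> \<le> 2 powr (\<bar>b\<bar>/2) * ((sqrt 2 * bracket d) powr (b + 1) / (b + 1))"
  proof -
    have "(1 + d) powr (b + 1) \<le> (sqrt 2 * bracket d) powr (b + 1)"
      using bracket_bounds(1)[OF d] b d by (intro powr_mono2) auto
    then show ?thesis
      using b by (intro mult_left_mono divide_right_mono) auto
  qed
  also have "\<dots> = bracket_int_const b * bracket d powr (b + 1)"
    by (simp add: bracket_int_const_def powr_mult)
  finally show ?thesis .
qed

lemma integral_bracket_powr_shift_le:
  assumes b: "b > -1" and xy: "x \<le> y"
  shows "integral {x..y} (\<lambda>s. bracket (s - x) powr b) \<le> bracket_int_const b * bracket (y - x) powr (b + 1)"
    and "integral {x..y} (\<lambda>s. bracket (y - s) powr b) \<le> bracket_int_const b * bracket (y - x) powr (b + 1)"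
proof -
  have "integral {x..y} (\<lambda>s. bracket (s - x) powr b) = integral {0..y - x} (\<lambda>s. bracket s powr b)"
    using integral_shift_real_ivl[of x x y "\<lambda>s. bracket (s - x) powr b"] by simp
  moreover have "integral {x..y} (\<lambda>s. bracket (y - s) powr b) = integral {0..y - x} (\<lambda>s. bracket s powr b)"
    using Henstock_Kurzweil_Integration.integral_reflect_real[where f = "\<lambda>s. bracket (y - s) powr b" and a = x and b = y]
          integral_shift_real_ivl[of "-y" "-y" "-x" "\<lambda>s. bracket (y + s) powr b"]
    by simp
  ultimately show "integral {x..y} (\<lambda>s. bracket (s - x) powr b) \<le> bracket_int_const b * bracket (y - x) powr (b + 1)"
    and "integral {x..y} (\<lambda>s. bracket (y - s) powr b) \<le> bracket_int_const b * bracket (y - x) powr (b + 1)"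
    using integral_bracket_powr_le[OF b, of "y - x"] xy by simp_all
qed

text \<open>\<open>radial_weight t p q r\<close> is \<open>\<tau>\<^sub>-\<^sup>p \<tau>\<^sub>+\<^sup>q\<close> at \<open>|x| = r\<close>, as \<open>\<tau>\<^sub>\<plusminus> = \<langle>t \<plusminus> r\<rangle>\<close>.\<close>

definition radial_weight :: "real \<Rightarrow> real \<Rightarrow> real \<Rightarrow> real \<Rightarrow> real" where
  "radial_weight t p q r = bracket (t - r) powr p * bracket (t + r) powr q"

lemma radial_weight_pos [simp]: "0 < radial_weight t p q r"
  by (simp add: radial_weight_def)

lemma radial_weight_nonneg [simp]: "0 \<le> radial_weight t p q r"
  by (simp add: less_imp_le)

lemma continuous_on_radial_weight [continuous_intros]: "continuous_on S (radial_weight t p q)"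
  unfolding radial_weight_def by (intro continuous_intros) auto

lemma radial_weight_square:
  "(radial_weight t (p + 1) q r)\<^sup>2 = radial_weight t p q r * radial_weight t (p + 2) q r"
  by (simp add: radial_weight_def power2_eq_square powr_add algebra_simps)

lemma powr_le_two_powr_abs_mult:
  fixes X Y q :: real
  assumes "0 < X" "0 < Y" and "0 \<le> q \<Longrightarrow> X \<le> 2 * Y" and "q < 0 \<Longrightarrow> Y \<le> 2 * X"
  shows "X powr q \<le> 2 powr \<bar>q\<bar> * Y powr q"
proof (cases "0 \<le> q")
  case True
  then have "X powr q \<le> (2 * Y) powr q"
    using assms by (intro powr_mono2) auto
  then show ?thesis
    using True assms by (simp add: powr_mult)
next
  case False
  then have "X powr q \<le> (Y / 2) powr q"
    using assms by (intro powr_mono2') auto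
  then show ?thesis
    using False assms by (simp add: powr_divide powr_minus_divide)
qed

definition interior_const :: "real \<Rightarrow> real \<Rightarrow> real" where
  "interior_const p q = 2 powr \<bar>q\<bar> * bracket_int_const p"

definition exterior_const :: "real \<Rightarrow> real \<Rightarrow> real" where
  "exterior_const p q = 2 powr \<bar>q\<bar> * (bracket_int_const p + bracket_int_const (p + q))"

text \<open>On \<open>[r, t]\<close> the weight \<open>\<tau>\<^sub>+\<close> varies by at most a factor 2, so \<open>\<tau>\<^sub>+\<^sup>q\<close> can be frozen
  at \<open>r\<close> whatever the sign of \<open>q\<close>; the same holds on \<open>[t, r]\<close> as long as \<open>r \<le> 3t\<close>.\<close>

lemma integral_radial_weight_interior:
  assumes p: "p > -1" and r: "0 \<le> r" "r \<le> t"
  shows "integral {r..t} (radial_weight t p q) \<le> interior_const p q * radial_weight t (p + 1) q r"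
proof -
  let ?M = "2 powr \<bar>q\<bar> * bracket (t + r) powr q"
  have "radial_weight t p q s \<le> ?M * bracket (t - s) powr p" if "s \<in> {r..t}" for s
  proof -
    have "bracket (t + s) powr q \<le> ?M"
      using that r by (intro powr_le_two_powr_abs_mult bracket_le_double) auto
    then show ?thesis
      unfolding radial_weight_def by (simp add: mult_left_mono mult.commute)
  qed
  then have "integral {r..t} (radial_weight t p q) \<le> integral {r..t} (\<lambda>s. ?M * bracket (t - s) powr p)"
    by (intro integral_le integrable_continuous_interval continuous_intros) auto
  also have "\<dots> \<le> ?M * (bracket_int_const p * bracket (t - r) powr (p + 1))"
    using integral_bracket_powr_shift_le(2)[OF p r(2)] by (simp add: mult_left_mono)
  finally show ?thesis
    by (simp add: interior_const_def radial_weight_def mult_ac)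
qed

lemma integral_radial_weight_exterior_near:
  assumes p: "p > -1" and t: "0 \<le> t" and r: "t \<le> r" and near: "q < 0 \<Longrightarrow> r \<le> 3 * t"
  shows "integral {t..r} (radial_weight t p q)
    \<le> 2 powr \<bar>q\<bar> * bracket_int_const p * radial_weight t (p + 1) q r"
proof -
  let ?M = "2 powr \<bar>q\<bar> * bracket (t + r) powr q"
  have "radial_weight t p q s \<le> ?M * bracket (s - t) powr p" if "s \<in> {t..r}" for s
  proof -
    have "bracket (t + s) powr q \<le> ?M"
      using that t near by (intro powr_le_two_powr_abs_mult bracket_le_double) auto
    then show ?thesis
      unfolding radial_weight_def by (simp add: mult_left_mono mult.commute bracket_diff_commute)
  qed
  then have "integral {t..r} (radial_weight t p q) \<le> integral {t..r} (\<lambda>s. ?M * bracket (s - t) powr p)"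
    by (intro integral_le integrable_continuous_interval continuous_intros) auto
  also have "\<dots> \<le> ?M * (bracket_int_const p * bracket (r - t) powr (p + 1))"
    using integral_bracket_powr_shift_le(1)[OF p r] by (simp add: mult_left_mono)
  finally show ?thesis
    by (simp add: radial_weight_def bracket_diff_commute mult_ac)
qed

text \<open>For \<open>q < 0\<close> and \<open>r > 3t\<close> the factor \<open>\<tau>\<^sub>+\<^sup>q\<close> is instead absorbed into \<open>\<tau>\<^sub>-\<^sup>q\<close>, using
  \<open>\<tau>\<^sub>- \<le> \<tau>\<^sub>+\<close>; this is where \<open>p + q > -1\<close> is needed.\<close>

lemma integral_radial_weight_exterior_far:
  assumes pq: "p + q > -1" and t: "0 \<le> t" and far: "3 * t < r" and q: "q < 0"
  shows "integral {t..r} (radial_weight t p q)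
    \<le> 2 powr \<bar>q\<bar> * bracket_int_const (p + q) * radial_weight t (p + 1) q r"
proof -
  have "radial_weight t p q s \<le> bracket (s - t) powr (p + q)" if "s \<in> {t..r}" for s
  proof -
    have "bracket (t + s) powr q \<le> bracket (s - t) powr q"
      using that t q by (intro powr_mono2' bracket_mono) auto
    then show ?thesis
      unfolding radial_weight_def by (simp add: powr_add bracket_diff_commute mult_left_mono)
  qed
  then have "integral {t..r} (radial_weight t p q) \<le> integral {t..r} (\<lambda>s. bracket (s - t) powr (p + q))"
    using far t by (intro integral_le integrable_continuous_interval continuous_intros) auto
  also have "\<dots> \<le> bracket_int_const (p + q) * (bracket (t - r) powr (p + 1) * bracket (t - r) powr q)"
    using integral_bracket_powr_shift_le(1)[OF pq, of t r] far t
    by (simp add: powr_add[symmetric] bracket_diff_commute add_ac)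
  also have "\<dots> \<le> bracket_int_const (p + q) * (bracket (t - r) powr (p + 1) * (2 powr \<bar>q\<bar> * bracket (t + r) powr q))"
    using far t q bracket_int_const_nonneg[OF pq]
    by (intro mult_left_mono powr_le_two_powr_abs_mult bracket_le_double) auto
  finally show ?thesis
    by (simp add: radial_weight_def mult_ac)
qed

lemma integral_radial_weight_exterior:
  assumes p: "p > -1" and pq: "p + q > -1" and t: "0 \<le> t" and r: "t \<le> r"
  shows "integral {t..r} (radial_weight t p q) \<le> exterior_const p q * radial_weight t (p + 1) q r"
proof -
  have "integral {t..r} (radial_weight t p q)
      \<le> 2 powr \<bar>q\<bar> * (bracket_int_const p + bracket_int_const (p + q)) * radial_weight t (p + 1) q r"
  proof (cases "q < 0 \<and> 3 * t < r")
    case True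
    have "integral {t..r} (radial_weight t p q)
        \<le> 2 powr \<bar>q\<bar> * bracket_int_const (p + q) * radial_weight t (p + 1) q r"
      using True by (intro integral_radial_weight_exterior_far[OF pq t]) auto
    also have "\<dots> \<le> 2 powr \<bar>q\<bar> * (bracket_int_const p + bracket_int_const (p + q)) * radial_weight t (p + 1) q r"
      using bracket_int_const_nonneg[OF p] by (intro mult_right_mono mult_left_mono) auto
    finally show ?thesis .
  next
    case False
    have "integral {t..r} (radial_weight t p q)
        \<le> 2 powr \<bar>q\<bar> * bracket_int_const p * radial_weight t (p + 1) q r"
      using False by (intro integral_radial_weight_exterior_near[OF p t r]) auto
    also have "\<dots> \<le> 2 powr \<bar>q\<bar> * (bracket_int_const p + bracket_int_const (p + q)) * radial_weight t (p + 1) q r"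
      using bracket_int_const_nonneg[OF pq] by (intro mult_right_mono mult_left_mono) auto
    finally show ?thesis .
  qed
  then show ?thesis
    by (simp add: exterior_const_def)
qed

section \<open>A weighted Hardy inequality on an interval\<close>

lemma has_real_derivative_cmod_square:
  fixes u :: "real \<Rightarrow> complex"
  assumes "(u has_vector_derivative u') (at r within S)"
  shows "((\<lambda>r. (cmod (u r))\<^sup>2) has_real_derivative 2 * Re (cnj (u r) * u')) (at r within S)"
proof -
  have "((\<lambda>x. Re (u x)) has_real_derivative Re u') (at r within S)"
    and "((\<lambda>x. Im (u x)) has_real_derivative Im u') (at r within S)"
    using assms by (auto simp: has_vector_derivative_complex_iff)
  from DERIV_add[OF DERIV_mult[OF this(1,1)] DERIV_mult[OF this(2,2)]] show ?thesis
    unfolding cmod_power2 by (simp add: power2_eq_square algebra_simps)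
qed

lemma abs_Re_cnj_mult_le_gauge:
  fixes z z' :: complex and c :: real
  shows "\<bar>Re (cnj z * z')\<bar> \<le> cmod z * cmod (z' + \<i> * complex_of_real c * z)"
proof -
  have "Re (cnj z * z') = Re (cnj z * (z' + \<i> * complex_of_real c * z))"
    by (simp add: algebra_simps)
  also have "\<bar>\<dots>\<bar> \<le> cmod z * cmod (z' + \<i> * complex_of_real c * z)"
    by (metis abs_Re_le_cmod complex_mod_cnj norm_mult)
  finally show ?thesis .
qed

lemma hardy_pointwise:
  fixes rho sigma P P' w g K :: real
  assumes rho: "0 < rho" and P: "0 \<le> P" and P': "\<bar>P'\<bar> \<le> 2 * sqrt P * g"
    and w: "w\<^sup>2 \<le> K * rho * sigma"
  shows "rho * P / 2 - 2 * K * (sigma * g\<^sup>2) \<le> rho * P + w * P'"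
proof -
  have "- (w * P') \<le> \<bar>w\<bar> * (2 * sqrt P * g)"
    using P' by (metis abs_ge_minus_self abs_ge_zero abs_mult mult_left_mono order_trans)
  also have "\<dots> \<le> rho * P / 2 + 2 * w\<^sup>2 * g\<^sup>2 / rho"
  proof -
    have "0 \<le> (rho * sqrt P - 2 * \<bar>w\<bar> * g)\<^sup>2"
      by simp
    then have "rho * (\<bar>w\<bar> * (2 * sqrt P * g)) \<le> rho * (rho * P / 2 + 2 * w\<^sup>2 * g\<^sup>2 / rho)"
      using rho P by (simp add: power2_eq_square algebra_simps)
    then show ?thesis
      using rho by simp
  qed
  also have "2 * w\<^sup>2 * g\<^sup>2 / rho \<le> 2 * (K * rho * sigma * g\<^sup>2) / rho"
    using mult_right_mono[OF w, of "g\<^sup>2"] rho by (intro divide_right_mono) auto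
  also have "\<dots> = 2 * K * (sigma * g\<^sup>2)"
    using rho by simp
  finally show ?thesis
    by simp
qed

lemma hardy_interval:
  fixes u u' :: "real \<Rightarrow> complex" and c w rho sigma :: "real \<Rightarrow> real"
  assumes ab: "a \<le> b"
    and du: "\<And>r. r \<in> {a..b} \<Longrightarrow> (u has_vector_derivative u' r) (at r within {a..b})"
    and cDu: "continuous_on {a..b} (\<lambda>r. u' r + \<i> * complex_of_real (c r) * u r)"
    and dw: "\<And>r. r \<in> {a..b} \<Longrightarrow> (w has_real_derivative rho r) (at r within {a..b})"
    and crho: "continuous_on {a..b} rho" and csigma: "continuous_on {a..b} sigma"
    and rho: "\<And>r. r \<in> {a..b} \<Longrightarrow> 0 < rho r"
    and w: "\<And>r. r \<in> {a..b} \<Longrightarrow> (w r)\<^sup>2 \<le> K * rho r * sigma r"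
  shows "integral {a..b} (\<lambda>r. rho r * (cmod (u r))\<^sup>2)
    \<le> 2 * (w b * (cmod (u b))\<^sup>2 - w a * (cmod (u a))\<^sup>2)
      + 4 * K * integral {a..b} (\<lambda>r. sigma r * (cmod (u' r + \<i> * complex_of_real (c r) * u r))\<^sup>2)"
proof -
  define P where "P r = (cmod (u r))\<^sup>2" for r
  define P' where "P' r = 2 * Re (cnj (u r) * u' r)" for r
  define g where "g r = cmod (u' r + \<i> * complex_of_real (c r) * u r)" for r
  have dP: "(P has_real_derivative P' r) (at r within {a..b})" if "r \<in> {a..b}" for r
    unfolding P_def P'_def by (rule has_real_derivative_cmod_square[OF du[OF that]])
  have cP: "continuous_on {a..b} P"
    using dP by (meson DERIV_continuous continuous_on_eq_continuous_within)
  have parts: "((\<lambda>r. rho r * P r + w r * P' r) has_integral w b * P b - w a * P a) {a..b}"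
    using fundamental_theorem_of_calculus[OF ab, of "\<lambda>r. w r * P r"] DERIV_mult[OF dw dP]
    by (simp add: has_real_derivative_iff_has_vector_derivative[symmetric] algebra_simps)
  have lower: "((\<lambda>r. rho r * P r / 2 - 2 * K * (sigma r * (g r)\<^sup>2)) has_integral
      integral {a..b} (\<lambda>r. rho r * P r) / 2 - 2 * K * integral {a..b} (\<lambda>r. sigma r * (g r)\<^sup>2)) {a..b}"
    unfolding g_def
    by (intro has_integral_diff has_integral_divide has_integral_mult_right integrable_integral
        integrable_continuous_interval continuous_intros crho cP csigma cDu)
  have "rho r * P r / 2 - 2 * K * (sigma r * (g r)\<^sup>2) \<le> rho r * P r + w r * P' r"
    if "r \<in> {a..b}" for r
  proof (rule hardy_pointwise[OF rho[OF that] _ _ w[OF that]])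
    show "0 \<le> P r"
      by (simp add: P_def)
    show "\<bar>P' r\<bar> \<le> 2 * sqrt (P r) * g r"
      using abs_Re_cnj_mult_le_gauge[of "u r" "u' r" "c r"] by (simp add: P_def P'_def g_def)
  qed
  then have "integral {a..b} (\<lambda>r. rho r * P r) / 2 - 2 * K * integral {a..b} (\<lambda>r. sigma r * (g r)\<^sup>2)
      \<le> w b * P b - w a * P a"
    by (rule has_integral_le[OF lower parts])
  then show ?thesis
    by (simp add: P_def g_def)
qed

section \<open>Hardy inequalities along a ray\<close>

lemma nn_integral_Icc_le_of_integral_le:
  fixes f g :: "real \<Rightarrow> real"
  assumes "continuous_on {a..b} f" "continuous_on {a..b} g"
    and "\<And>r. r \<in> {a..b} \<Longrightarrow> 0 \<le> f r" "\<And>r. r \<in> {a..b} \<Longrightarrow> 0 \<le> g r" "0 \<le> B" "0 \<le> C"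
    and le: "integral {a..b} f \<le> B + C * integral {a..b} g"
  shows "(\<integral>\<^sup>+ r\<in>{a..b}. ennreal (f r) \<partial>lborel)
    \<le> ennreal B + ennreal C * (\<integral>\<^sup>+ r\<in>{a..b}. ennreal (g r) \<partial>lborel)"
proof -
  have eq: "(\<integral>\<^sup>+ r\<in>{a..b}. ennreal (h r) \<partial>lborel) = ennreal (integral {a..b} h)"
    if "continuous_on {a..b} h" "\<And>r. r \<in> {a..b} \<Longrightarrow> 0 \<le> h r" for h
    using that by (intro nn_integral_has_integral_lebesgue' integrable_integral integrable_continuous_interval)
  have "0 \<le> integral {a..b} g"
    using assms by (intro integral_nonneg integrable_continuous_interval)
  have "(\<integral>\<^sup>+ r\<in>{a..b}. ennreal (f r) \<partial>lborel) = ennreal (integral {a..b} f)"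
    using assms by (intro eq)
  also have "\<dots> \<le> ennreal (B + C * integral {a..b} g)"
    using le by (rule ennreal_leI)
  also have "\<dots> = ennreal B + ennreal C * ennreal (integral {a..b} g)"
    using assms \<open>0 \<le> integral {a..b} g\<close> by (subst ennreal_plus) (auto simp: ennreal_mult)
  also have "ennreal (integral {a..b} g) = (\<integral>\<^sup>+ r\<in>{a..b}. ennreal (g r) \<partial>lborel)"
    using assms by (intro eq[symmetric])
  finally show ?thesis .
qed

lemma hardy_ray_interior:
  fixes u u' :: "real \<Rightarrow> complex" and c :: "real \<Rightarrow> real"
  assumes p: "p > -1" and t: "0 \<le> t"
    and du: "\<And>r. (u has_vector_derivative u' r) (at r)"
    and cDu: "continuous_on UNIV (\<lambda>r. u' r + \<i> * complex_of_real (c r) * u r)"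
    and u0: "u 0 = 0"
  shows "(\<integral>\<^sup>+ r\<in>{0..t}. ennreal (radial_weight t p q r * (cmod (u r))\<^sup>2) \<partial>lborel)
    \<le> ennreal (4 * (interior_const p q)\<^sup>2) *
      (\<integral>\<^sup>+ r\<in>{0..t}. ennreal (radial_weight t (p + 2) q r
                                   * (cmod (u' r + \<i> * complex_of_real (c r) * u r))\<^sup>2) \<partial>lborel)"
proof -
  define K where "K = interior_const p q"
  define w where "w r = - integral {r..t} (radial_weight t p q)" for r
  \<comment> \<open>\<open>w t = 0\<close> and \<open>u 0 = 0\<close>, so both boundary terms vanish\<close>
  have cu: "continuous_on S u" for S
    using du by (meson continuous_at_imp_continuous_on has_vector_derivative_continuous)
  have le: "integral {0..t} (\<lambda>r. radial_weight t p q r * (cmod (u r))\<^sup>2)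
      \<le> 2 * (w t * (cmod (u t))\<^sup>2 - w 0 * (cmod (u 0))\<^sup>2)
        + 4 * K\<^sup>2 * integral {0..t} (\<lambda>r. radial_weight t (p + 2) q r
                                           * (cmod (u' r + \<i> * complex_of_real (c r) * u r))\<^sup>2)"
  proof (rule hardy_interval[OF t has_vector_derivative_at_within[OF du]
        continuous_on_subset[OF cDu subset_UNIV] _ continuous_on_radial_weight continuous_on_radial_weight])
    show "(w has_real_derivative radial_weight t p q r) (at r within {0..t})" if "r \<in> {0..t}" for r
      unfolding w_def
      using DERIV_minus[OF integral_has_real_derivative'[OF continuous_on_radial_weight that]] by simp
    show "(w r)\<^sup>2 \<le> K\<^sup>2 * radial_weight t p q r * radial_weight t (p + 2) q r" if "r \<in> {0..t}" for r
    proof -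
      have "0 \<le> integral {r..t} (radial_weight t p q)"
        by (intro integral_nonneg integrable_continuous_interval continuous_intros) auto
      then have "(w r)\<^sup>2 \<le> (K * radial_weight t (p + 1) q r)\<^sup>2"
        using that integral_radial_weight_interior[OF p, of r t q] by (simp add: w_def K_def power_mono)
      then show ?thesis
        by (simp add: power_mult_distrib radial_weight_square mult.assoc)
    qed
  qed simp
  have cf: "continuous_on {0..t} (\<lambda>r. radial_weight t p q r * (cmod (u r))\<^sup>2)"
    by (intro continuous_intros cu)
  have cg: "continuous_on {0..t} (\<lambda>r. radial_weight t (p + 2) q r
                                    * (cmod (u' r + \<i> * complex_of_real (c r) * u r))\<^sup>2)"
    by (rule continuous_on_mult[OF continuous_on_radial_weight
          continuous_on_power[OF continuous_on_norm[OF continuous_on_subset[OF cDu]]]]) auto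
  show ?thesis
    using nn_integral_Icc_le_of_integral_le[OF cf cg _ _ order_refl, of "4 * K\<^sup>2"] le u0
    by (simp add: w_def K_def)
qed

lemma exterior_const_nonneg: "p > -1 \<Longrightarrow> p + q > -1 \<Longrightarrow> 0 \<le> exterior_const p q"
  by (simp add: exterior_const_def bracket_int_const_nonneg)

lemma radial_weight_le_bracket_powr:
  assumes b: "0 \<le> b" and t: "0 \<le> t" and R: "t \<le> R"
  shows "radial_weight t b q R \<le> 2 powr \<bar>q\<bar> * bracket R powr (b + q)"
proof -
  have "bracket (t - R) powr b \<le> bracket R powr b"
    using t R b by (intro powr_mono2 bracket_mono) auto
  moreover have "bracket (t + R) powr q \<le> 2 powr \<bar>q\<bar> * bracket R powr q"
    using t R by (intro powr_le_two_powr_abs_mult bracket_le_double) auto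
  ultimately have "radial_weight t b q R \<le> bracket R powr b * (2 powr \<bar>q\<bar> * bracket R powr q)"
    unfolding radial_weight_def by (intro mult_mono) auto
  then show ?thesis
    by (simp add: powr_add mult_ac)
qed

lemma hardy_ray_exterior_Icc_integral:
  fixes u u' :: "real \<Rightarrow> complex" and c :: "real \<Rightarrow> real"
  assumes p: "p > -1" and pq: "p + q > -1" and t: "0 \<le> t" and R: "t \<le> R"
    and du: "\<And>r. (u has_vector_derivative u' r) (at r)"
    and cDu: "continuous_on UNIV (\<lambda>r. u' r + \<i> * complex_of_real (c r) * u r)"
  shows "integral {t..R} (\<lambda>r. radial_weight t p q r * (cmod (u r))\<^sup>2)
    \<le> 2 * exterior_const p q * 2 powr \<bar>q\<bar> * (bracket R powr (p + q + 1) * (cmod (u R))\<^sup>2)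
      + 4 * (exterior_const p q)\<^sup>2 * integral {t..R} (\<lambda>r. radial_weight t (p + 2) q r
                                           * (cmod (u' r + \<i> * complex_of_real (c r) * u r))\<^sup>2)"
proof -
  define K where "K = exterior_const p q"
  define w where "w r = integral {t..r} (radial_weight t p q)" for r
  have w: "0 \<le> w r \<and> w r \<le> K * radial_weight t (p + 1) q r" if "t \<le> r" for r
    using that integral_radial_weight_exterior[OF p pq t that]
    by (auto simp: w_def K_def intro!: integral_nonneg integrable_continuous_interval continuous_intros)
  have le: "integral {t..R} (\<lambda>r. radial_weight t p q r * (cmod (u r))\<^sup>2)
      \<le> 2 * (w R * (cmod (u R))\<^sup>2 - w t * (cmod (u t))\<^sup>2)
        + 4 * K\<^sup>2 * integral {t..R} (\<lambda>r. radial_weight t (p + 2) q r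
                                           * (cmod (u' r + \<i> * complex_of_real (c r) * u r))\<^sup>2)"
  proof (rule hardy_interval[OF R has_vector_derivative_at_within[OF du]
        continuous_on_subset[OF cDu subset_UNIV] _ continuous_on_radial_weight continuous_on_radial_weight])
    show "(w has_real_derivative radial_weight t p q r) (at r within {t..R})" if "r \<in> {t..R}" for r
      unfolding w_def by (rule integral_has_real_derivative[OF continuous_on_radial_weight that])
    show "(w r)\<^sup>2 \<le> K\<^sup>2 * radial_weight t p q r * radial_weight t (p + 2) q r" if "r \<in> {t..R}" for r
    proof -
      have "(w r)\<^sup>2 \<le> (K * radial_weight t (p + 1) q r)\<^sup>2"
        using that w[of r] by (intro power_mono) auto
      then show ?thesis
        by (simp add: power_mult_distrib radial_weight_square mult.assoc)
    qed
  qed simp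
  have "radial_weight t (p + 1) q R \<le> 2 powr \<bar>q\<bar> * bracket R powr (p + q + 1)"
    using radial_weight_le_bracket_powr[of "p + 1" t R q] p t R by (simp add: add_ac)
  then have wR: "w R \<le> K * (2 powr \<bar>q\<bar> * bracket R powr (p + q + 1))"
    using w[OF R] exterior_const_nonneg[OF p pq] unfolding K_def by (meson mult_left_mono order_trans)
  have "w R * (cmod (u R))\<^sup>2 \<le> K * 2 powr \<bar>q\<bar> * (bracket R powr (p + q + 1) * (cmod (u R))\<^sup>2)"
    using mult_right_mono[OF wR, of "(cmod (u R))\<^sup>2"] by (simp add: mult_ac)
  then show ?thesis
    using le by (simp add: w_def K_def)
qed

lemma nn_integral_inverse_one_plus:
  assumes "0 \<le> a" "a \<le> b"
  shows "(\<integral>\<^sup>+ r\<in>{a..b}. ennreal (1 / (1 + r)) \<partial>lborel) = ennreal (ln (1 + b) - ln (1 + a))"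
proof (rule nn_integral_has_integral_lebesgue')
  show "((\<lambda>r. 1 / (1 + r)) has_integral ln (1 + b) - ln (1 + a)) {a..b}"
  proof (rule fundamental_theorem_of_calculus[OF assms(2)])
    fix s assume "s \<in> {a..b}"
    then have "0 < 1 + s"
      using assms by auto
    then show "((\<lambda>r. ln (1 + r)) has_vector_derivative 1 / (1 + s)) (at s within {a..b})"
      by (auto intro!: derivative_eq_intros simp flip: has_real_derivative_iff_has_vector_derivative)
  qed
qed (use assms in auto)

lemma nn_integral_inverse_one_plus_Ici:
  assumes a: "0 \<le> a"
  shows "(\<integral>\<^sup>+ r\<in>{a..}. ennreal (1 / (1 + r)) \<partial>lborel) = \<infinity>"
proof (rule ccontr)
  assume "(\<integral>\<^sup>+ r\<in>{a..}. ennreal (1 / (1 + r)) \<partial>lborel) \<noteq> \<infinity>"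
  then obtain B where B: "(\<integral>\<^sup>+ r\<in>{a..}. ennreal (1 / (1 + r)) \<partial>lborel) = ennreal B" "0 \<le> B"
    by (cases "\<integral>\<^sup>+ r\<in>{a..}. ennreal (1 / (1 + r)) \<partial>lborel") auto
  define M where "M = exp (B + 1) * (1 + a) - 1"
  have "1 * (1 + a) \<le> exp (B + 1) * (1 + a)"
    using a B by (intro mult_right_mono) auto
  then have M: "a \<le> M"
    by (simp add: M_def)
  have "ennreal (B + 1) = ennreal (ln (1 + M) - ln (1 + a))"
    using a by (simp add: M_def ln_mult)
  also have "\<dots> = (\<integral>\<^sup>+ r\<in>{a..M}. ennreal (1 / (1 + r)) \<partial>lborel)"
    using nn_integral_inverse_one_plus[OF a M] by simp
  also have "\<dots> \<le> ennreal B"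
    unfolding B(1)[symmetric] by (intro nn_integral_mono) (auto simp: indicator_def)
  finally show False
    using B by (simp add: ennreal_le_iff)
qed

lemma ex_small_value_of_finite_nn_integral:
  fixes P :: "real \<Rightarrow> real"
  assumes P: "\<And>r. 0 \<le> P r"
    and fin: "(\<integral>\<^sup>+ r\<in>{t..}. ennreal (bracket r powr b * P r) \<partial>lborel) < \<infinity>" and e: "0 < e"
  shows "\<exists>R\<ge>N. bracket R powr (b + 1) * P R < e"
proof (rule ccontr)
  assume "\<not> ?thesis"
  then have big: "e \<le> bracket r powr b * P r * bracket r" if "N \<le> r" for r
    using that by (auto simp: not_less powr_add mult_ac)
  define N' where "N' = max N (max t 0)"
  have "e * (1 / (1 + r)) \<le> bracket r powr b * P r" if "N' \<le> r" for r
  proof -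
    have r: "0 \<le> r" "N \<le> r"
      using that by (auto simp: N'_def)
    have "e \<le> bracket r powr b * P r * (1 + r)"
      using big[OF r(2)] bracket_bounds(2)[OF r(1)] P[of r]
      by (meson mult_left_mono order_trans powr_ge_zero zero_le_mult_iff)
    then show ?thesis
      using r by (simp add: divide_le_eq mult_ac)
  qed
  then have "(\<integral>\<^sup>+ r\<in>{N'..}. ennreal e * ennreal (1 / (1 + r)) \<partial>lborel)
      \<le> (\<integral>\<^sup>+ r\<in>{t..}. ennreal (bracket r powr b * P r) \<partial>lborel)"
    using e by (intro nn_integral_mono) (auto simp: indicator_def N'_def ennreal_mult'[symmetric] ennreal_leI)
  moreover have "(\<integral>\<^sup>+ r\<in>{N'..}. ennreal e * ennreal (1 / (1 + r)) \<partial>lborel) = \<infinity>"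
    using e nn_integral_inverse_one_plus_Ici[of N']
    by (simp add: N'_def nn_integral_cmult mult.assoc ennreal_mult_top)
  ultimately show False
    using fin by simp
qed

lemma nn_integral_Ici_le_of_Icc_le:
  fixes f :: "real \<Rightarrow> ennreal"
  assumes [measurable]: "f \<in> borel_measurable borel"
    and le: "\<And>N. t \<le> N \<Longrightarrow> (\<integral>\<^sup>+ r\<in>{t..N}. f r \<partial>lborel) \<le> B"
  shows "(\<integral>\<^sup>+ r\<in>{t..}. f r \<partial>lborel) \<le> B"
proof -
  define F where "F n r = f r * indicator {t..t + real n} r" for n :: nat and r
  have "incseq F"
    unfolding F_def incseq_def le_fun_def by (auto intro!: mult_left_mono simp: indicator_def)
  have "(SUP n. F n r) = f r * indicator {t..} r" for r
  proof (cases "t \<le> r")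
    case True
    obtain n :: nat where "r - t \<le> real n"
      using real_arch_simple by blast
    then have "F n r = f r" and "F m r \<le> f r" for m
      using True by (auto simp: F_def indicator_def)
    then show ?thesis
      using True by (auto intro!: antisym SUP_least intro: SUP_upper2[of n])
  qed (simp add: F_def indicator_def)
  then have "(\<integral>\<^sup>+ r\<in>{t..}. f r \<partial>lborel) = (\<integral>\<^sup>+ r. (SUP n. F n r) \<partial>lborel)"
    by simp
  also have "\<dots> = (SUP n. integral\<^sup>N lborel (F n))"
    by (rule nn_integral_monotone_convergence_SUP[OF \<open>incseq F\<close>]) (unfold F_def, measurable)
  also have "\<dots> \<le> B"
    using le by (auto intro!: SUP_least simp: F_def[abs_def])
  finally show ?thesis .
qed

lemma hardy_ray_exterior_Icc:
  fixes u u' :: "real \<Rightarrow> complex" and c :: "real \<Rightarrow> real"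
  assumes p: "p > -1" and pq: "p + q > -1" and t: "0 \<le> t" and R: "t \<le> R"
    and du: "\<And>r. (u has_vector_derivative u' r) (at r)"
    and cDu: "continuous_on UNIV (\<lambda>r. u' r + \<i> * complex_of_real (c r) * u r)"
  shows "(\<integral>\<^sup>+ r\<in>{t..R}. ennreal (radial_weight t p q r * (cmod (u r))\<^sup>2) \<partial>lborel)
    \<le> ennreal (2 * exterior_const p q * 2 powr \<bar>q\<bar> * (bracket R powr (p + q + 1) * (cmod (u R))\<^sup>2))
      + ennreal (4 * (exterior_const p q)\<^sup>2) *
        (\<integral>\<^sup>+ r\<in>{t..}. ennreal (radial_weight t (p + 2) q r
                                     * (cmod (u' r + \<i> * complex_of_real (c r) * u r))\<^sup>2) \<partial>lborel)"
proof -
  have cu: "continuous_on S u" for S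
    using du by (meson continuous_at_imp_continuous_on has_vector_derivative_continuous)
  have cf: "continuous_on {t..R} (\<lambda>r. radial_weight t p q r * (cmod (u r))\<^sup>2)"
    by (intro continuous_intros cu)
  have cg: "continuous_on {t..R} (\<lambda>r. radial_weight t (p + 2) q r
                                    * (cmod (u' r + \<i> * complex_of_real (c r) * u r))\<^sup>2)"
    by (rule continuous_on_mult[OF continuous_on_radial_weight
          continuous_on_power[OF continuous_on_norm[OF continuous_on_subset[OF cDu]]]]) auto
  have "(\<integral>\<^sup>+ r\<in>{t..R}. ennreal (radial_weight t p q r * (cmod (u r))\<^sup>2) \<partial>lborel)
    \<le> ennreal (2 * exterior_const p q * 2 powr \<bar>q\<bar> * (bracket R powr (p + q + 1) * (cmod (u R))\<^sup>2))
      + ennreal (4 * (exterior_const p q)\<^sup>2) *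
        (\<integral>\<^sup>+ r\<in>{t..R}. ennreal (radial_weight t (p + 2) q r
                                     * (cmod (u' r + \<i> * complex_of_real (c r) * u r))\<^sup>2) \<partial>lborel)"
    using hardy_ray_exterior_Icc_integral[OF p pq t R du cDu] exterior_const_nonneg[OF p pq]
    by (intro nn_integral_Icc_le_of_integral_le[OF cf cg]) auto
  also have "\<dots> \<le> ennreal (2 * exterior_const p q * 2 powr \<bar>q\<bar> * (bracket R powr (p + q + 1) * (cmod (u R))\<^sup>2))
      + ennreal (4 * (exterior_const p q)\<^sup>2) *
        (\<integral>\<^sup>+ r\<in>{t..}. ennreal (radial_weight t (p + 2) q r
                                     * (cmod (u' r + \<i> * complex_of_real (c r) * u r))\<^sup>2) \<partial>lborel)"
    by (intro add_mono mult_left_mono nn_integral_mono) (auto simp: indicator_def)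
  finally show ?thesis .
qed

lemma hardy_ray_exterior:
  fixes u u' :: "real \<Rightarrow> complex" and c :: "real \<Rightarrow> real"
  assumes p: "p > -1" and pq: "p + q > -1" and t: "0 \<le> t"
    and du: "\<And>r. (u has_vector_derivative u' r) (at r)"
    and cDu: "continuous_on UNIV (\<lambda>r. u' r + \<i> * complex_of_real (c r) * u r)"
    and fin: "(\<integral>\<^sup>+ r\<in>{t..}. ennreal (bracket r powr (p + q) * (cmod (u r))\<^sup>2) \<partial>lborel) < \<infinity>"
  shows "(\<integral>\<^sup>+ r\<in>{t..}. ennreal (radial_weight t p q r * (cmod (u r))\<^sup>2) \<partial>lborel)
    \<le> ennreal (4 * (exterior_const p q)\<^sup>2) *
      (\<integral>\<^sup>+ r\<in>{t..}. ennreal (radial_weight t (p + 2) q r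
                                   * (cmod (u' r + \<i> * complex_of_real (c r) * u r))\<^sup>2) \<partial>lborel)"
    (is "_ \<le> ?rhs")
proof (rule nn_integral_Ici_le_of_Icc_le)
  define D where "D = 2 * exterior_const p q * 2 powr \<bar>q\<bar>"
  have D: "0 \<le> D"
    using exterior_const_nonneg[OF p pq] by (simp add: D_def)
  fix N assume N: "t \<le> N"
  show "(\<integral>\<^sup>+ r\<in>{t..N}. ennreal (radial_weight t p q r * (cmod (u r))\<^sup>2) \<partial>lborel) \<le> ?rhs"
  proof (rule ennreal_le_epsilon)
    fix e :: real assume e: "0 < e"
    obtain R where R: "N \<le> R" and small: "bracket R powr (p + q + 1) * (cmod (u R))\<^sup>2 < e / (D + 1)"
      using ex_small_value_of_finite_nn_integral[OF _ fin, of "e / (D + 1)" N] e D by auto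
    have "D * (bracket R powr (p + q + 1) * (cmod (u R))\<^sup>2)
        \<le> (D + 1) * (bracket R powr (p + q + 1) * (cmod (u R))\<^sup>2)"
      by (simp add: algebra_simps)
    also have "\<dots> < e"
      using small D by (simp add: pos_less_divide_eq mult.commute)
    finally have boundary: "D * (bracket R powr (p + q + 1) * (cmod (u R))\<^sup>2) \<le> e"
      by simp
    have "(\<integral>\<^sup>+ r\<in>{t..N}. ennreal (radial_weight t p q r * (cmod (u r))\<^sup>2) \<partial>lborel)
        \<le> (\<integral>\<^sup>+ r\<in>{t..R}. ennreal (radial_weight t p q r * (cmod (u r))\<^sup>2) \<partial>lborel)"
      using R by (intro nn_integral_mono) (auto simp: indicator_def)
    also have "\<dots> \<le> ennreal (D * (bracket R powr (p + q + 1) * (cmod (u R))\<^sup>2)) + ?rhs"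
      using hardy_ray_exterior_Icc[OF p pq t _ du cDu, of R] N R by (simp add: D_def)
    also have "\<dots> \<le> ?rhs + ennreal e"
      using boundary by (simp add: add.commute ennreal_leI add_left_mono)
    finally show "(\<integral>\<^sup>+ r\<in>{t..N}. ennreal (radial_weight t p q r * (cmod (u r))\<^sup>2) \<partial>lborel) \<le> ?rhs + ennreal e" .
  qed
next
  have "continuous_on UNIV u"
    using du by (meson continuous_at_imp_continuous_on has_vector_derivative_continuous)
  then show "(\<lambda>r. ennreal (radial_weight t p q r * (cmod (u r))\<^sup>2)) \<in> borel_measurable borel"
    by (intro measurable_compose[OF _ measurable_ennreal] borel_measurable_continuous_onI continuous_intros)
qed

section \<open>Polar coordinates\<close>

lemma nn_integral_lborel_scaleR:
  fixes g :: "'a::euclidean_space \<Rightarrow> ennreal"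
  assumes [measurable]: "g \<in> borel_measurable borel" and c: "c \<noteq> 0"
  shows "(\<integral>\<^sup>+ x. g x \<partial>lborel) = ennreal (\<bar>c\<bar> ^ DIM('a)) * (\<integral>\<^sup>+ x. g (c *\<^sub>R x) \<partial>lborel)"
  by (subst lborel_affine[OF c, of 0])
     (simp add: nn_integral_density nn_integral_distr nn_integral_cmult)

text \<open>No surface measure on the sphere is needed: the radii \<open>[1, e]\<close> of the shell are chosen
  so that \<open>\<integral> ds/s = 1\<close> over \<open>{s. 1 \<le> |x|/s \<le> e}\<close> for every \<open>x \<noteq> 0\<close>. By Tonelli and a
  dilation, averaging the radial integrals over the shell then recovers the integral over
  the whole space.\<close>

definition unit_shell :: "'a::euclidean_space \<Rightarrow> ennreal" where
  "unit_shell y = indicator {y. 1 \<le> norm y \<and> norm y \<le> exp 1} y"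

definition radial_integral :: "('a::euclidean_space \<Rightarrow> ennreal) \<Rightarrow> 'a \<Rightarrow> ennreal" where
  "radial_integral F y = (\<integral>\<^sup>+ s. indicator {0<..} s * F (s *\<^sub>R y) * ennreal (s ^ (DIM('a) - 1)) \<partial>lborel)"

lemma unit_shell_measurable [measurable]: "unit_shell \<in> borel_measurable borel"
  unfolding unit_shell_def by measurable

lemma radial_integral_measurable [measurable]:
  assumes [measurable]: "F \<in> borel_measurable borel"
  shows "radial_integral F \<in> borel_measurable borel"
  unfolding radial_integral_def by measurable

lemma nn_integral_unit_shell_dilation:
  fixes x :: "'a::euclidean_space"
  assumes "x \<noteq> 0"
  shows "(\<integral>\<^sup>+ s. indicator {0<..} s * ennreal (1 / s) * unit_shell ((1 / s) *\<^sub>R x) \<partial>lborel) = 1"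
proof -
  let ?a = "norm x"
  have a: "0 < ?a" and pos: "0 < ?a / exp 1"
    using assms by auto
  have "indicator {0<..} s * ennreal (1 / s) * unit_shell ((1 / s) *\<^sub>R x)
      = ennreal (1 / s) * indicator {?a / exp 1 .. ?a} s" for s :: real
  proof (cases "0 < s")
    case True
    then have "(1 \<le> ?a / s \<and> ?a / s \<le> exp 1) \<longleftrightarrow> (?a / exp 1 \<le> s \<and> s \<le> ?a)"
      by (auto simp: field_simps)
    then show ?thesis
      using True by (simp add: unit_shell_def indicator_def divide_inverse mult.commute)
  qed (use pos in \<open>auto simp: indicator_def\<close>)
  moreover have "((\<lambda>s. 1 / s) has_integral (ln ?a - ln (?a / exp 1))) {?a / exp 1 .. ?a}"
  proof (rule fundamental_theorem_of_calculus)
    fix s assume "s \<in> {?a / exp 1 .. ?a}"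
    then have "0 < s"
      using pos by auto
    then show "(ln has_vector_derivative 1 / s) (at s within {?a / exp 1 .. ?a})"
      by (auto intro!: derivative_eq_intros simp flip: has_real_derivative_iff_has_vector_derivative)
  qed (use a in \<open>simp add: divide_le_eq\<close>)
  then have "((\<lambda>s. 1 / s) has_integral 1) {?a / exp 1 .. ?a}"
    using a by (simp add: ln_div)
  ultimately show ?thesis
    using pos by (simp, subst nn_integral_has_integral_lebesgue') auto
qed

lemma nn_integral_unit_shell_scaleR:
  fixes F :: "'a::euclidean_space \<Rightarrow> ennreal"
  assumes [measurable]: "F \<in> borel_measurable borel" and s: "0 < s"
  shows "(\<integral>\<^sup>+ y. unit_shell y * (F (s *\<^sub>R y) * ennreal (s ^ (DIM('a) - 1))) \<partial>lborel)
    = (\<integral>\<^sup>+ x. ennreal (1 / s) * unit_shell ((1 / s) *\<^sub>R x) * F x \<partial>lborel)"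
proof -
  have "s ^ (DIM('a) - 1) = (1 / s) * s ^ DIM('a)"
    using s by (simp add: power_eq_if[of s "DIM('a)"] DIM_positive)
  then have pow: "ennreal (s ^ (DIM('a) - 1)) = ennreal (1 / s) * ennreal (s ^ DIM('a))"
    using s by (simp only:) (rule ennreal_mult; simp)
  have "(\<integral>\<^sup>+ y. unit_shell y * (F (s *\<^sub>R y) * ennreal (s ^ (DIM('a) - 1))) \<partial>lborel)
      = (\<integral>\<^sup>+ y. ennreal (1 / s) * (ennreal (s ^ DIM('a)) * (unit_shell y * F (s *\<^sub>R y))) \<partial>lborel)"
    by (simp only: pow mult_ac)
  also have "\<dots> = ennreal (1 / s) * (ennreal (s ^ DIM('a)) * (\<integral>\<^sup>+ y. unit_shell y * F (s *\<^sub>R y) \<partial>lborel))"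
    by (simp add: nn_integral_cmult)
  also have "\<dots> = ennreal (1 / s) * (\<integral>\<^sup>+ x. unit_shell ((1 / s) *\<^sub>R x) * F x \<partial>lborel)"
    using s nn_integral_lborel_scaleR[of "\<lambda>x. unit_shell ((1 / s) *\<^sub>R x) * F x" s] by simp
  also have "\<dots> = (\<integral>\<^sup>+ x. ennreal (1 / s) * unit_shell ((1 / s) *\<^sub>R x) * F x \<partial>lborel)"
    by (simp add: nn_integral_cmult[symmetric] mult.assoc)
  finally show ?thesis .
qed

lemma nn_integral_unit_shell_radial:
  assumes [measurable]: "F \<in> borel_measurable borel"
  shows "(\<integral>\<^sup>+ y. unit_shell y * radial_integral F y \<partial>lborel) = (\<integral>\<^sup>+ x. F x \<partial>lborel)"
proof -
  have "(\<integral>\<^sup>+ y. unit_shell y * radial_integral F y \<partial>lborel)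
      = (\<integral>\<^sup>+ y. \<integral>\<^sup>+ s. unit_shell y * (indicator {0<..} s * F (s *\<^sub>R y) * ennreal (s ^ (DIM('a) - 1))) \<partial>lborel \<partial>lborel)"
    unfolding radial_integral_def
    by (intro nn_integral_cong nn_integral_cmult[symmetric]) measurable
  also have "\<dots> = (\<integral>\<^sup>+ s. \<integral>\<^sup>+ y. unit_shell y * (indicator {0<..} s * F (s *\<^sub>R y) * ennreal (s ^ (DIM('a) - 1))) \<partial>lborel \<partial>lborel)"
    by (rule lborel_pair.Fubini') measurable
  also have "\<dots> = (\<integral>\<^sup>+ s. \<integral>\<^sup>+ x. indicator {0<..} s * ennreal (1 / s) * unit_shell ((1 / s) *\<^sub>R x) * F x \<partial>lborel \<partial>lborel)"
  proof (rule nn_integral_cong)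
    fix s :: real
    show "(\<integral>\<^sup>+ y. unit_shell y * (indicator {0<..} s * F (s *\<^sub>R y) * ennreal (s ^ (DIM('a) - 1))) \<partial>lborel)
        = (\<integral>\<^sup>+ x. indicator {0<..} s * ennreal (1 / s) * unit_shell ((1 / s) *\<^sub>R x) * F x \<partial>lborel)"
      using nn_integral_unit_shell_scaleR[of F s] by (cases "0 < s") simp_all
  qed
  also have "\<dots> = (\<integral>\<^sup>+ x. \<integral>\<^sup>+ s. indicator {0<..} s * ennreal (1 / s) * unit_shell ((1 / s) *\<^sub>R x) * F x \<partial>lborel \<partial>lborel)"
    by (rule lborel_pair.Fubini') measurable
  also have "\<dots> = (\<integral>\<^sup>+ x. F x \<partial>lborel)"
    using AE_lborel_singleton[of 0]
    by (intro nn_integral_cong_AE) (auto elim!: eventually_mono simp: nn_integral_multc nn_integral_unit_shell_dilation)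
  finally show ?thesis .
qed

lemma radial_integral_sgn:
  fixes F :: "'a::euclidean_space \<Rightarrow> ennreal"
  assumes [measurable]: "F \<in> borel_measurable borel" and y: "y \<noteq> 0"
  shows "radial_integral F (y /\<^sub>R norm y) = ennreal (norm y ^ DIM('a)) * radial_integral F y"
proof -
  let ?L = "norm y" and ?n = "DIM('a)"
  have L: "0 < ?L"
    using y by simp
  have "indicator {0<..} (?L * s) * F ((?L * s) *\<^sub>R (y /\<^sub>R ?L)) * ennreal ((?L * s) ^ (?n - 1))
      = ennreal (?L ^ (?n - 1)) * (indicator {0<..} s * F (s *\<^sub>R y) * ennreal (s ^ (?n - 1)))" for s
    using L by (simp add: indicator_def zero_less_mult_iff power_mult_distrib ennreal_mult mult_ac)
  then have "radial_integral F (y /\<^sub>R ?L)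
      = ennreal ?L * (\<integral>\<^sup>+ s. ennreal (?L ^ (?n - 1)) * (indicator {0<..} s * F (s *\<^sub>R y) * ennreal (s ^ (?n - 1))) \<partial>lborel)"
    unfolding radial_integral_def using L
    by (subst nn_integral_real_affine[where c = ?L and t = 0]) auto
  also have "\<dots> = ennreal (?L * ?L ^ (?n - 1)) * radial_integral F y"
    unfolding radial_integral_def by (simp add: nn_integral_cmult ennreal_mult mult.assoc)
  also have "?L * ?L ^ (?n - 1) = ?L ^ ?n"
    by (simp add: power_eq_if[of _ ?n] DIM_positive)
  finally show ?thesis .
qed

lemma nn_integral_le_of_radial_le:
  fixes F G E :: "'a::euclidean_space \<Rightarrow> ennreal"
  assumes [measurable]: "F \<in> borel_measurable borel" "G \<in> borel_measurable borel" "E \<in> borel_measurable borel"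
    and E: "(\<integral>\<^sup>+ x. E x \<partial>lborel) < \<infinity>"
    and radial: "\<And>\<omega>. norm \<omega> = 1 \<Longrightarrow> radial_integral E \<omega> < \<infinity> \<Longrightarrow> radial_integral F \<omega> \<le> C * radial_integral G \<omega>"
  shows "(\<integral>\<^sup>+ x. F x \<partial>lborel) \<le> C * (\<integral>\<^sup>+ x. G x \<partial>lborel)"
proof -
  have "AE y in lborel. unit_shell y * radial_integral E y \<noteq> \<infinity>"
    using E by (intro nn_integral_PInf_AE) (auto simp: nn_integral_unit_shell_radial)
  then have "AE y in lborel. unit_shell y * radial_integral F y \<le> C * (unit_shell y * radial_integral G y)"
  proof eventually_elim
    case (elim y)
    show ?case
    proof (cases "unit_shell y = 0")
      case False
      then have y: "y \<noteq> 0" and shell: "unit_shell y = 1"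
        by (auto simp: unit_shell_def indicator_def split: if_splits)
      have pos: "ennreal (norm y ^ DIM('a)) \<noteq> 0" and fin: "ennreal (norm y ^ DIM('a)) \<noteq> top"
        using y by auto
      have "radial_integral E (y /\<^sub>R norm y) < \<infinity>"
        using elim shell fin by (simp add: radial_integral_sgn y ennreal_mult_less_top less_top)
      then have "radial_integral F (y /\<^sub>R norm y) \<le> C * radial_integral G (y /\<^sub>R norm y)"
        using y by (intro radial) auto
      then have "ennreal (norm y ^ DIM('a)) * radial_integral F y \<le> ennreal (norm y ^ DIM('a)) * (C * radial_integral G y)"
        by (simp add: radial_integral_sgn y mult_ac)
      then show ?thesis
        using shell ennreal_mult_le_mult_iff[OF pos fin] by simp
    qed simp
  qed
  then have "(\<integral>\<^sup>+ y. unit_shell y * radial_integral F y \<partial>lborel) \<le> (\<integral>\<^sup>+ y. C * (unit_shell y * radial_integral G y) \<partial>lborel)"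
    by (rule nn_integral_mono_AE)
  then show ?thesis
    by (simp add: nn_integral_cmult nn_integral_unit_shell_radial)
qed

section \<open>Smooth sections along rays\<close>

lemma smooth_continuous: "smooth f \<Longrightarrow> continuous_on UNIV f"
  unfolding smooth_def by (drule spec[where x = 0]) simp

lemma smooth_has_derivative: "smooth f \<Longrightarrow> (f has_derivative frechet_derivative f (at x)) (at x)"
  unfolding smooth_def
  by (drule spec[where x = 1]) (simp add: differentiable_on_def frechet_derivative_works[symmetric])

lemma smooth_partial_continuous:
  "smooth f \<Longrightarrow> i \<in> Basis \<Longrightarrow> continuous_on UNIV (\<lambda>x. frechet_derivative f (at x) i)"
  unfolding smooth_def by (drule spec[where x = 1]) simp

lemma continuous_on_frechet_derivative_smooth:
  fixes f :: "'a::euclidean_space \<Rightarrow> 'b::real_normed_vector"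
  assumes f: "smooth f" and v: "continuous_on UNIV v"
  shows "continuous_on UNIV (\<lambda>x. frechet_derivative f (at x) (v x))"
proof -
  have "frechet_derivative f (at x) (v x) = (\<Sum>i\<in>Basis. (v x \<bullet> i) *\<^sub>R frechet_derivative f (at x) i)" for x
  proof -
    have lin: "linear (frechet_derivative f (at x))"
      using smooth_has_derivative[OF f] by (rule has_derivative_linear)
    have "frechet_derivative f (at x) (v x) = frechet_derivative f (at x) (\<Sum>i\<in>Basis. (v x \<bullet> i) *\<^sub>R i)"
      by (simp only: euclidean_representation)
    then show ?thesis
      by (simp add: linear_sum[OF lin] linear_scale[OF lin])
  qed
  moreover have "continuous_on UNIV (\<lambda>x. \<Sum>i\<in>Basis. (v x \<bullet> i) *\<^sub>R frechet_derivative f (at x) i)"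
    by (intro continuous_intros smooth_partial_continuous[OF f] v)
  ultimately show ?thesis
    by simp
qed

definition ray_profile :: "('a::real_vector \<Rightarrow> complex) \<Rightarrow> 'a \<Rightarrow> real \<Rightarrow> complex" where
  "ray_profile phi \<omega> s = complex_of_real s * phi (s *\<^sub>R \<omega>)"

definition ray_profile_deriv :: "('a::real_normed_vector \<Rightarrow> complex) \<Rightarrow> 'a \<Rightarrow> real \<Rightarrow> complex" where
  "ray_profile_deriv phi \<omega> s = phi (s *\<^sub>R \<omega>) + complex_of_real s * frechet_derivative phi (at (s *\<^sub>R \<omega>)) \<omega>"

definition ray_cov_deriv :: "('a \<Rightarrow> 'a::real_inner) \<Rightarrow> ('a \<Rightarrow> complex) \<Rightarrow> 'a \<Rightarrow> real \<Rightarrow> complex" where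
  "ray_cov_deriv A phi \<omega> s =
    ray_profile_deriv phi \<omega> s + \<i> * complex_of_real (A (s *\<^sub>R \<omega>) \<bullet> \<omega>) * ray_profile phi \<omega> s"

lemma has_vector_derivative_ray_profile:
  fixes phi :: "'a::euclidean_space \<Rightarrow> complex"
  assumes phi: "smooth phi"
  shows "(ray_profile phi \<omega> has_vector_derivative ray_profile_deriv phi \<omega> s) (at s)"
proof -
  have lin: "linear (frechet_derivative phi (at (s *\<^sub>R \<omega>)))"
    using smooth_has_derivative[OF phi] by (rule has_derivative_linear)
  have "((\<lambda>s. phi (s *\<^sub>R \<omega>)) has_derivative (\<lambda>h. frechet_derivative phi (at (s *\<^sub>R \<omega>)) (h *\<^sub>R \<omega>))) (at s)"
    by (rule has_derivative_compose[OF _ smooth_has_derivative[OF phi]]) (auto intro!: derivative_eq_intros)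
  then have "((\<lambda>s. phi (s *\<^sub>R \<omega>)) has_vector_derivative frechet_derivative phi (at (s *\<^sub>R \<omega>)) \<omega>) (at s)"
    by (simp add: has_vector_derivative_def linear_scale[OF lin])
  from has_vector_derivative_mult[OF has_vector_derivative_of_real[OF DERIV_ident] this] show ?thesis
    unfolding ray_profile_def ray_profile_deriv_def by (simp add: add.commute)
qed

lemma continuous_on_ray_cov_deriv:
  fixes phi :: "'a::euclidean_space \<Rightarrow> complex" and A :: "'a \<Rightarrow> 'a"
  assumes phi: "smooth phi" and A: "smooth A"
  shows "continuous_on UNIV (ray_cov_deriv A phi \<omega>)"
proof -
  have ray: "continuous_on UNIV (\<lambda>s. f (s *\<^sub>R \<omega>))" if "continuous_on UNIV f" for f :: "'a \<Rightarrow> 'b::topological_space"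
    by (rule continuous_on_compose2[OF that]) (auto intro!: continuous_intros)
  have "continuous_on UNIV (\<lambda>s. phi (s *\<^sub>R \<omega>))" "continuous_on UNIV (\<lambda>s. A (s *\<^sub>R \<omega>))"
    "continuous_on UNIV (\<lambda>s. frechet_derivative phi (at (s *\<^sub>R \<omega>)) \<omega>)"
    using ray[OF smooth_continuous[OF phi]] ray[OF smooth_continuous[OF A]]
      ray[OF continuous_on_frechet_derivative_smooth[OF phi continuous_on_const]] by simp_all
  then show ?thesis
    unfolding ray_cov_deriv_def ray_profile_deriv_def ray_profile_def
    by (intro continuous_intros)
qed

lemma rad_term_eq:
  fixes phi :: "real^3 \<Rightarrow> complex" and A :: "real^3 \<Rightarrow> real^3"
  assumes phi: "smooth phi"
  shows "rad_term A phi x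
    = (phi x + frechet_derivative phi (at x) x + \<i> * complex_of_real (A x \<bullet> x) * phi x) / complex_of_real (norm x)"
proof (cases "x = 0")
  case False
  define r where "r = norm x"
  have r: "0 < r"
    using False by (simp add: r_def)
  have "((\<lambda>y. complex_of_real (norm y) * phi y) has_derivative
      (\<lambda>h. complex_of_real (norm x) * frechet_derivative phi (at x) h + complex_of_real (h \<bullet> sgn x) * phi x)) (at x)"
    by (rule has_derivative_mult[OF has_derivative_of_real[OF has_derivative_norm[OF False]] smooth_has_derivative[OF phi]])
  then have fd: "frechet_derivative (\<lambda>y. complex_of_real (norm y) * phi y) (at x)
      = (\<lambda>h. complex_of_real (norm x) * frechet_derivative phi (at x) h + complex_of_real (h \<bullet> sgn x) * phi x)"
    by (rule frechet_derivative_at[symmetric])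
  have lin: "linear (frechet_derivative phi (at x))"
    using smooth_has_derivative[OF phi] by (rule has_derivative_linear)
  have "frechet_derivative phi (at x) (x /\<^sub>R r) = frechet_derivative phi (at x) x / complex_of_real r"
    using r by (simp only: linear_scale[OF lin]) (simp add: scaleR_conv_of_real divide_inverse mult.commute)
  moreover have "(x /\<^sub>R r) \<bullet> sgn x = 1"
    using r False by (simp add: sgn_div_norm r_def power2_norm_eq_inner[symmetric] power2_eq_square)
  ultimately show ?thesis
    using r unfolding rad_term_def radial_cov_deriv_def cov_deriv_def fd r_def[symmetric]
    by (simp add: field_simps)
qed (simp add: rad_term_def)

lemma rad_term_on_ray:
  fixes phi :: "real^3 \<Rightarrow> complex" and A :: "real^3 \<Rightarrow> real^3"
  assumes phi: "smooth phi" and \<omega>: "norm \<omega> = 1" and s: "0 < s"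
  shows "complex_of_real s * rad_term A phi (s *\<^sub>R \<omega>) = ray_cov_deriv A phi \<omega> s"
proof -
  have lin: "linear (frechet_derivative phi (at (s *\<^sub>R \<omega>)))"
    using smooth_has_derivative[OF phi] by (rule has_derivative_linear)
  have "frechet_derivative phi (at (s *\<^sub>R \<omega>)) (s *\<^sub>R \<omega>)
      = complex_of_real s * frechet_derivative phi (at (s *\<^sub>R \<omega>)) \<omega>"
    by (simp only: linear_scale[OF lin]) (simp add: scaleR_conv_of_real)
  then show ?thesis
    using s \<omega> unfolding rad_term_eq[OF phi] ray_cov_deriv_def ray_profile_deriv_def ray_profile_def
    by (simp add: field_simps)
qed

lemma borel_measurable_rad_term:
  fixes phi :: "real^3 \<Rightarrow> complex" and A :: "real^3 \<Rightarrow> real^3"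
  assumes phi: "smooth phi" and A: "smooth A"
  shows "rad_term A phi \<in> borel_measurable borel"
proof -
  have "continuous_on UNIV (\<lambda>x. phi x + frechet_derivative phi (at x) x + \<i> * complex_of_real (A x \<bullet> x) * phi x)"
    by (intro continuous_intros smooth_continuous phi A continuous_on_frechet_derivative_smooth)
  then have [measurable]: "(\<lambda>x. phi x + frechet_derivative phi (at x) x + \<i> * complex_of_real (A x \<bullet> x) * phi x)
      \<in> borel_measurable borel"
    by (rule borel_measurable_continuous_onI)
  show ?thesis
    unfolding rad_term_eq[OF phi, abs_def] by measurable
qed

section \<open>The estimates in \<open>\<real>\<^sup>3\<close>\<close>

lemma tau_measurable [measurable]:
  "tau_minus t \<in> borel_measurable borel" "tau_plus t \<in> borel_measurable borel"
  unfolding tau_minus_def[abs_def] tau_plus_def[abs_def] by measurable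

lemma radial_integral_wint_integrand:
  fixes f :: "real^3 \<Rightarrow> complex"
  assumes \<omega>: "norm \<omega> = 1"
  shows "radial_integral (\<lambda>x. ennreal (tau_minus t x powr p * tau_plus t x powr q * (cmod (f x))\<^sup>2)
                               * indicator {x. Q (norm x)} x) \<omega>
    = (\<integral>\<^sup>+ s\<in>{s. 0 < s \<and> Q s}. ennreal (radial_weight t p q s * (cmod (complex_of_real s * f (s *\<^sub>R \<omega>)))\<^sup>2) \<partial>lborel)"
  unfolding radial_integral_def
proof (rule nn_integral_cong)
  fix s :: real
  show "indicator {0<..} s * (ennreal (tau_minus t (s *\<^sub>R \<omega>) powr p * tau_plus t (s *\<^sub>R \<omega>) powr q
          * (cmod (f (s *\<^sub>R \<omega>)))\<^sup>2) * indicator {x. Q (norm x)} (s *\<^sub>R \<omega>)) * ennreal (s ^ (DIM(real^3) - 1))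
      = ennreal (radial_weight t p q s * (cmod (complex_of_real s * f (s *\<^sub>R \<omega>)))\<^sup>2) * indicator {s. 0 < s \<and> Q s} s"
  proof (cases "0 < s")
    case True
    then have "norm (s *\<^sub>R \<omega>) = s"
      using \<omega> by simp
    then have "tau_minus t (s *\<^sub>R \<omega>) powr p * tau_plus t (s *\<^sub>R \<omega>) powr q * (cmod (f (s *\<^sub>R \<omega>)))\<^sup>2 * s\<^sup>2
        = radial_weight t p q s * (cmod (complex_of_real s * f (s *\<^sub>R \<omega>)))\<^sup>2"
      by (simp add: tau_minus_def tau_plus_def radial_weight_def bracket_def norm_mult power_mult_distrib)
    then show ?thesis
      using True \<open>norm (s *\<^sub>R \<omega>) = s\<close>
      by (cases "Q s") (simp_all add: ennreal_mult[symmetric] del: ennreal_mult)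
  qed simp
qed

lemma radial_integral_H1a_integrand:
  fixes phi :: "real^3 \<Rightarrow> complex"
  assumes \<omega>: "norm \<omega> = 1"
  shows "radial_integral (\<lambda>x. ennreal ((1 + (norm x)\<^sup>2) powr (b / 2) * (cmod (phi x))\<^sup>2)) \<omega>
    = (\<integral>\<^sup>+ s\<in>{0<..}. ennreal (bracket s powr b * (cmod (ray_profile phi \<omega> s))\<^sup>2) \<partial>lborel)"
  unfolding radial_integral_def
proof (rule nn_integral_cong)
  fix s :: real
  show "indicator {0<..} s * ennreal ((1 + (norm (s *\<^sub>R \<omega>))\<^sup>2) powr (b / 2) * (cmod (phi (s *\<^sub>R \<omega>)))\<^sup>2)
        * ennreal (s ^ (DIM(real^3) - 1))
      = ennreal (bracket s powr b * (cmod (ray_profile phi \<omega> s))\<^sup>2) * indicator {0<..} s"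
  proof (cases "0 < s")
    case True
    then have "norm (s *\<^sub>R \<omega>) = s"
      using \<omega> by simp
    moreover have "(cmod (ray_profile phi \<omega> s))\<^sup>2 = (cmod (phi (s *\<^sub>R \<omega>)))\<^sup>2 * s\<^sup>2"
      by (simp add: ray_profile_def norm_mult power_mult_distrib)
    ultimately show ?thesis
      using True by (simp add: bracket_powr_eq indicator_def ennreal_mult mult.assoc)
  qed simp
qed

lemma wint_le_of_ray_le:
  fixes phi :: "real^3 \<Rightarrow> complex" and A :: "real^3 \<Rightarrow> real^3" and E :: "real^3 \<Rightarrow> ennreal"
  assumes phi: "smooth phi" and A: "smooth A" and [measurable]: "Measurable.pred borel Q"
    and [measurable]: "E \<in> borel_measurable borel" and E: "(\<integral>\<^sup>+ x. E x \<partial>lborel) < \<infinity>"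
    and ray: "\<And>\<omega>. norm \<omega> = 1 \<Longrightarrow> radial_integral E \<omega> < \<infinity> \<Longrightarrow>
      (\<integral>\<^sup>+ s\<in>{s. 0 < s \<and> Q s}. ennreal (radial_weight t p q s * (cmod (ray_profile phi \<omega> s))\<^sup>2) \<partial>lborel)
      \<le> ennreal C * (\<integral>\<^sup>+ s\<in>{s. 0 < s \<and> Q s}.
                        ennreal (radial_weight t (p + 2) q s * (cmod (ray_cov_deriv A phi \<omega> s))\<^sup>2) \<partial>lborel)"
  shows "wint {x. Q (norm x)} t p q phi \<le> ennreal C * wint {x. Q (norm x)} t (p + 2) q (rad_term A phi)"
proof -
  have [measurable]: "phi \<in> borel_measurable borel" "rad_term A phi \<in> borel_measurable borel"
    using borel_measurable_continuous_onI[OF smooth_continuous[OF phi]] borel_measurable_rad_term[OF phi A]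
    by auto
  have "radial_integral (\<lambda>x. ennreal (tau_minus t x powr (p + 2) * tau_plus t x powr q * (cmod (rad_term A phi x))\<^sup>2)
                               * indicator {x. Q (norm x)} x) \<omega>
    = (\<integral>\<^sup>+ s\<in>{s. 0 < s \<and> Q s}. ennreal (radial_weight t (p + 2) q s * (cmod (ray_cov_deriv A phi \<omega> s))\<^sup>2) \<partial>lborel)"
    if "norm \<omega> = 1" for \<omega>
    unfolding radial_integral_wint_integrand[OF that]
    by (intro set_nn_integral_cong) (auto simp: rad_term_on_ray[OF phi that])
  moreover have "radial_integral (\<lambda>x. ennreal (tau_minus t x powr p * tau_plus t x powr q * (cmod (phi x))\<^sup>2)
                               * indicator {x. Q (norm x)} x) \<omega>
    = (\<integral>\<^sup>+ s\<in>{s. 0 < s \<and> Q s}. ennreal (radial_weight t p q s * (cmod (ray_profile phi \<omega> s))\<^sup>2) \<partial>lborel)"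
    if "norm \<omega> = 1" for \<omega>
    unfolding radial_integral_wint_integrand[OF that] ray_profile_def ..
  ultimately show ?thesis
    unfolding wint_def by (intro nn_integral_le_of_radial_le[OF _ _ _ E]) (auto intro!: ray)
qed

lemma wint_interior_le:
  fixes phi :: "real^3 \<Rightarrow> complex" and A :: "real^3 \<Rightarrow> real^3"
  assumes p: "p > -1" and t: "0 \<le> t" and phi: "smooth phi" and A: "smooth A"
  shows "wint {x. norm x < t} t p q phi
    \<le> ennreal (4 * (interior_const p q)\<^sup>2) * wint {x. norm x < t} t (p + 2) q (rad_term A phi)"
proof (rule wint_le_of_ray_le[OF phi A, where E = "\<lambda>_. 0"])
  fix \<omega> :: "real^3"
  let ?f = "\<lambda>s. ennreal (radial_weight t p q s * (cmod (ray_profile phi \<omega> s))\<^sup>2)"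
  let ?g = "\<lambda>s. ennreal (radial_weight t (p + 2) q s * (cmod (ray_cov_deriv A phi \<omega> s))\<^sup>2)"
  have "(\<integral>\<^sup>+ s\<in>{s. 0 < s \<and> s < t}. ?f s \<partial>lborel) \<le> (\<integral>\<^sup>+ s\<in>{0..t}. ?f s \<partial>lborel)"
    by (intro nn_integral_mono) (auto simp: indicator_def)
  also have "\<dots> \<le> ennreal (4 * (interior_const p q)\<^sup>2) * (\<integral>\<^sup>+ s\<in>{0..t}. ?g s \<partial>lborel)"
    unfolding ray_cov_deriv_def
    using continuous_on_ray_cov_deriv[OF phi A, of \<omega>]
    by (intro hardy_ray_interior[OF p t has_vector_derivative_ray_profile[OF phi]])
       (simp_all add: ray_cov_deriv_def ray_profile_def)
  also have "(\<integral>\<^sup>+ s\<in>{0..t}. ?g s \<partial>lborel) = (\<integral>\<^sup>+ s\<in>{s. 0 < s \<and> s < t}. ?g s \<partial>lborel)"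
    by (rule nn_integral_cong_AE)
       (use AE_lborel_singleton[of 0] AE_lborel_singleton[of t] in \<open>eventually_elim, auto simp: indicator_def\<close>)
  finally show "(\<integral>\<^sup>+ s\<in>{s. 0 < s \<and> s < t}. ?f s \<partial>lborel)
      \<le> ennreal (4 * (interior_const p q)\<^sup>2) * (\<integral>\<^sup>+ s\<in>{s. 0 < s \<and> s < t}. ?g s \<partial>lborel)" .
qed auto

lemma wint_exterior_le:
  fixes phi :: "real^3 \<Rightarrow> complex" and A :: "real^3 \<Rightarrow> real^3"
  assumes p: "p > -1" and pq: "p + q > -1" and t: "0 \<le> t" and phi: "smooth phi" and A: "smooth A"
    and H: "H1a_norm_sq ((p + q) / 2) A phi < \<infinity>"
  shows "wint {x. t < norm x} t p q phi
    \<le> ennreal (4 * (exterior_const p q)\<^sup>2) * wint {x. t < norm x} t (p + 2) q (rad_term A phi)"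
proof (rule wint_le_of_ray_le[OF phi A,
      where E = "\<lambda>x. ennreal ((1 + (norm x)\<^sup>2) powr ((p + q) / 2) * (cmod (phi x))\<^sup>2)"])
  show "(\<integral>\<^sup>+ x. ennreal ((1 + (norm x)\<^sup>2) powr ((p + q) / 2) * (cmod (phi x))\<^sup>2) \<partial>lborel) < \<infinity>"
    using H unfolding H1a_norm_sq_def by (auto intro: le_less_trans[OF add_increasing2])
  show "(\<lambda>x. ennreal ((1 + (norm x)\<^sup>2) powr ((p + q) / 2) * (cmod (phi x))\<^sup>2)) \<in> borel_measurable borel"
    using borel_measurable_continuous_onI[OF smooth_continuous[OF phi]] by measurable
next
  fix \<omega> :: "real^3"
  assume \<omega>: "norm \<omega> = 1"
    and fin: "radial_integral (\<lambda>x. ennreal ((1 + (norm x)\<^sup>2) powr ((p + q) / 2) * (cmod (phi x))\<^sup>2)) \<omega> < \<infinity>"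
  let ?f = "\<lambda>s. ennreal (radial_weight t p q s * (cmod (ray_profile phi \<omega> s))\<^sup>2)"
  let ?g = "\<lambda>s. ennreal (radial_weight t (p + 2) q s * (cmod (ray_cov_deriv A phi \<omega> s))\<^sup>2)"
  have "(\<integral>\<^sup>+ s\<in>{t..}. ennreal (bracket s powr (p + q) * (cmod (ray_profile phi \<omega> s))\<^sup>2) \<partial>lborel)
      \<le> (\<integral>\<^sup>+ s\<in>{0<..}. ennreal (bracket s powr (p + q) * (cmod (ray_profile phi \<omega> s))\<^sup>2) \<partial>lborel)"
    by (rule nn_integral_mono_AE)
       (use AE_lborel_singleton[of 0] in \<open>eventually_elim, insert t, auto simp: indicator_def\<close>)
  also have "\<dots> < \<infinity>"
    using fin radial_integral_H1a_integrand[OF \<omega>, of "p + q" phi] by simp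
  finally have fin': "(\<integral>\<^sup>+ s\<in>{t..}. ennreal (bracket s powr (p + q) * (cmod (ray_profile phi \<omega> s))\<^sup>2) \<partial>lborel) < \<infinity>" .
  have "(\<integral>\<^sup>+ s\<in>{s. 0 < s \<and> t < s}. ?f s \<partial>lborel) \<le> (\<integral>\<^sup>+ s\<in>{t..}. ?f s \<partial>lborel)"
    by (intro nn_integral_mono) (auto simp: indicator_def)
  also have "\<dots> \<le> ennreal (4 * (exterior_const p q)\<^sup>2) * (\<integral>\<^sup>+ s\<in>{t..}. ?g s \<partial>lborel)"
    unfolding ray_cov_deriv_def
    using continuous_on_ray_cov_deriv[OF phi A, of \<omega>]
    by (intro hardy_ray_exterior[OF p pq t has_vector_derivative_ray_profile[OF phi] _ fin'])
       (simp add: ray_cov_deriv_def)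
  also have "(\<integral>\<^sup>+ s\<in>{t..}. ?g s \<partial>lborel) = (\<integral>\<^sup>+ s\<in>{s. 0 < s \<and> t < s}. ?g s \<partial>lborel)"
    by (rule nn_integral_cong_AE)
       (use AE_lborel_singleton[of t] in \<open>eventually_elim, insert t, auto simp: indicator_def\<close>)
  finally show "(\<integral>\<^sup>+ s\<in>{s. 0 < s \<and> t < s}. ?f s \<partial>lborel)
      \<le> ennreal (4 * (exterior_const p q)\<^sup>2) * (\<integral>\<^sup>+ s\<in>{s. 0 < s \<and> t < s}. ?g s \<partial>lborel)" .
qed auto

lemma wint_UNIV_split:
  fixes f :: "real^3 \<Rightarrow> complex"
  assumes [measurable]: "f \<in> borel_measurable borel"
  shows "wint UNIV t p q f = wint {x. norm x < t} t p q f + wint {x. t < norm x} t p q f"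
proof -
  have null: "sphere (0 :: real^3) t \<in> null_sets lborel"
    using negligible_sphere[of "0 :: real^3" t]
    by (auto simp: null_sets_completion_iff negligible_iff_null_sets)
  have "AE x in lborel. norm (x :: real^3) \<noteq> t"
    using AE_not_in[OF null] by eventually_elim auto
  then have "wint UNIV t p q f
      = (\<integral>\<^sup>+ x. ennreal (tau_minus t x powr p * tau_plus t x powr q * (cmod (f x))\<^sup>2) * indicator {x. norm x < t} x
              + ennreal (tau_minus t x powr p * tau_plus t x powr q * (cmod (f x))\<^sup>2) * indicator {x. t < norm x} x \<partial>lborel)"
    unfolding wint_def by (intro nn_integral_cong_AE) (auto elim!: eventually_mono simp: indicator_def)
  also have "\<dots> = wint {x. norm x < t} t p q f + wint {x. t < norm x} t p q f"
    unfolding wint_def by (rule nn_integral_add) measurable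
  finally show ?thesis .
qed

lemma wint_UNIV_le:
  fixes phi :: "real^3 \<Rightarrow> complex" and A :: "real^3 \<Rightarrow> real^3"
  assumes p: "p > -1" and pq: "p + q > -1" and t: "0 \<le> t" and phi: "smooth phi" and A: "smooth A"
    and H: "H1a_norm_sq ((p + q) / 2) A phi < \<infinity>"
  shows "wint UNIV t p q phi
    \<le> ennreal (4 * (interior_const p q)\<^sup>2 + 4 * (exterior_const p q)\<^sup>2) * wint UNIV t (p + 2) q (rad_term A phi)"
proof -
  let ?Ci = "4 * (interior_const p q)\<^sup>2" and ?Ce = "4 * (exterior_const p q)\<^sup>2"
  have [measurable]: "phi \<in> borel_measurable borel" "rad_term A phi \<in> borel_measurable borel"
    using borel_measurable_continuous_onI[OF smooth_continuous[OF phi]] borel_measurable_rad_term[OF phi A]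
    by auto
  have "wint UNIV t p q phi = wint {x. norm x < t} t p q phi + wint {x. t < norm x} t p q phi"
    by (rule wint_UNIV_split) measurable
  also have "\<dots> \<le> ennreal ?Ci * wint {x. norm x < t} t (p + 2) q (rad_term A phi)
      + ennreal ?Ce * wint {x. t < norm x} t (p + 2) q (rad_term A phi)"
    by (intro add_mono wint_interior_le wint_exterior_le assms)
  also have "\<dots> \<le> ennreal (?Ci + ?Ce) * wint {x. norm x < t} t (p + 2) q (rad_term A phi)
      + ennreal (?Ci + ?Ce) * wint {x. t < norm x} t (p + 2) q (rad_term A phi)"
    by (intro add_mono mult_right_mono ennreal_leI) auto
  also have "\<dots> = ennreal (?Ci + ?Ce) * wint UNIV t (p + 2) q (rad_term A phi)"
    by (simp add: wint_UNIV_split[of "rad_term A phi"] distrib_left)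
  finally show ?thesis .
qed

lemma ex_pos_const_ennreal:
  assumes "0 \<le> C\<^sub>0" and "\<And>t A phi. P t A phi \<Longrightarrow> X t A phi \<le> ennreal C\<^sub>0 * Y t A phi"
  shows "\<exists>C::real. C > 0 \<and> (\<forall>t A phi. P t A phi \<longrightarrow> X t A phi \<le> ennreal C * Y t A phi)"
proof (intro exI[of _ "C\<^sub>0 + 1"] conjI allI impI)
  fix t A phi
  assume "P t A phi"
  then have "X t A phi \<le> ennreal C\<^sub>0 * Y t A phi"
    by (rule assms(2))
  also have "\<dots> \<le> ennreal (C\<^sub>0 + 1) * Y t A phi"
    by (intro mult_right_mono ennreal_leI) auto
  finally show "X t A phi \<le> ennreal (C\<^sub>0 + 1) * Y t A phi" .
qed (use assms(1) in simp)

theorem lemma6p3: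
  fixes p q :: real
  shows
   "(-1 < p \<and> 0 < p + 1 + q \<longrightarrow>
      (\<exists>C::real. C > 0 \<and> (\<forall>(t::real) A phi.
         t \<ge> 0 \<and> smooth A \<and> smooth phi \<and> H1a_norm_sq ((p + q) / 2) A phi < \<infinity> \<longrightarrow>
         wint {x. t < norm x} t p q phi \<le> ennreal C * wint {x. t < norm x} t (p + 2) q (rad_term A phi))))
    \<and> (-1 < p \<and> q < p + 1 \<longrightarrow>
      (\<exists>C::real. C > 0 \<and> (\<forall>(t::real) A phi.
         t \<ge> 0 \<and> smooth A \<and> smooth phi \<and> H1a_norm_sq ((p + q) / 2) A phi < \<infinity> \<longrightarrow>
         wint {x. norm x < t} t p q phi \<le> ennreal C * wint {x. norm x < t} t (p + 2) q (rad_term A phi))))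
    \<and> (-1 < p \<and> \<bar>q\<bar> < p + 1 \<longrightarrow>
      (\<exists>C::real. C > 0 \<and> (\<forall>(t::real) A phi.
         t \<ge> 0 \<and> smooth A \<and> smooth phi \<and> H1a_norm_sq ((p + q) / 2) A phi < \<infinity> \<longrightarrow>
         wint UNIV t p q phi \<le> ennreal C * wint UNIV t (p + 2) q (rad_term A phi))))"
proof (intro conjI impI; rule ex_pos_const_ennreal)
  assume "-1 < p \<and> 0 < p + 1 + q"
  then show "0 \<le> 4 * (exterior_const p q)\<^sup>2"
    and "\<And>t A phi. t \<ge> 0 \<and> smooth A \<and> smooth phi \<and> H1a_norm_sq ((p + q) / 2) A phi < \<infinity> \<Longrightarrow>
      wint {x. t < norm x} t p q phi
      \<le> ennreal (4 * (exterior_const p q)\<^sup>2) * wint {x. t < norm x} t (p + 2) q (rad_term A phi)"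
    by (auto intro!: wint_exterior_le)
next
  assume "-1 < p \<and> q < p + 1"
  then show "0 \<le> 4 * (interior_const p q)\<^sup>2"
    and "\<And>t A phi. t \<ge> 0 \<and> smooth A \<and> smooth phi \<and> H1a_norm_sq ((p + q) / 2) A phi < \<infinity> \<Longrightarrow>
      wint {x. norm x < t} t p q phi
      \<le> ennreal (4 * (interior_const p q)\<^sup>2) * wint {x. norm x < t} t (p + 2) q (rad_term A phi)"
    by (auto intro!: wint_interior_le)
next
  assume "-1 < p \<and> \<bar>q\<bar> < p + 1"
  then show "0 \<le> 4 * (interior_const p q)\<^sup>2 + 4 * (exterior_const p q)\<^sup>2"
    and "\<And>t A phi. t \<ge> 0 \<and> smooth A \<and> smooth phi \<and> H1a_norm_sq ((p + q) / 2) A phi < \<infinity> \<Longrightarrow>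
      wint UNIV t p q phi
      \<le> ennreal (4 * (interior_const p q)\<^sup>2 + 4 * (exterior_const p q)\<^sup>2) * wint UNIV t (p + 2) q (rad_term A phi)"
    by (auto intro!: wint_UNIV_le simp del: ennreal_plus)
qed

end
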